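(* Let $m,n\in\mathbb{N}$ be such that ${\rm SR}(m,n)$ has at least one vertex. Then the smallest eigenvalue of ${\rm SR}(m,n)$ equals $\max\left(-n,\,-\binom{m}{2}\right)$.
   Context: $\mathbb{N}=\{0,1,2,\dots\}$. For $m,n\in\mathbb{N}$, ${\rm SR}(m,n)$ is the graph whose vertices are the vectors in $\mathbb{N}^m$ with coordinate sum $n$, two vertices being adjacent when they differ in precisely two coordinate positions. Eigenvalues are those of the adjacency matrix. *)

theory Defs
  imports "Jordan_Normal_Form.Char_Poly"
begin

definition SR_vertices :: "nat \<Rightarrow> nat \<Rightarrow> nat list set" where
  "SR_vertices m n = {xs. length xs = m \<and> sum_list xs = n}"

definition SR_adj :: "nat \<Rightarrow> nat list \<Rightarrow> nat list \<Rightarrow> bool" where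
  "SR_adj m xs ys = (card {i. i < m \<and> xs ! i \<noteq> ys ! i} = 2)"

text \<open>A fixed enumeration (without repetition) of the vertex set; the spectrum does not depend on it.\<close>
definition SR_enum :: "nat \<Rightarrow> nat \<Rightarrow> nat list list" where
  "SR_enum m n = (SOME vs. distinct vs \<and> set vs = SR_vertices m n)"

definition SR_adj_matrix :: "nat \<Rightarrow> nat \<Rightarrow> real mat" where
  "SR_adj_matrix m n =
     (let vs = SR_enum m n
      in mat (length vs) (length vs)
           (\<lambda>(i, j). if SR_adj m (vs ! i) (vs ! j) then 1 else 0))"

end

theory Submission
  imports Defs
begin

text \<open>
  The edges of SR(m,n) are partitioned by two families of cliques. A pair clique fixes all
  coordinates outside two positions \<open>i < j\<close>, and every vertex lies in \<open>m choose 2\<close> of them.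
  A shift clique consists of the vectors \<open>w + t e\<^sub>k\<close> for fixed \<open>w\<close> and \<open>t > 0\<close>, and a vertex
  \<open>x\<close> lies in exactly \<open>n\<close> of them, one for each \<open>k\<close> and \<open>1 \<le> t \<le> x\<^sub>k\<close>.
  If every vertex lies in \<open>c\<close> cliques of such a partition, then \<open>A + c I = N N\<^sup>T\<close> for the
  vertex-clique incidence matrix \<open>N\<close>; hence every eigenvalue is at least \<open>-c\<close>, and every nonzero
  function whose sum over each clique vanishes is an eigenvector for \<open>-c\<close>.
  For \<open>m choose 2 \<le> n\<close> such a function for the pair cliques is the signed indicator of the
  rearrangements of the staircase \<open>(0, 1, \<dots>, m - 2, m - 1 + (n - m choose 2))\<close>: a transposition of
  two coordinates maps each pair clique to itself and reverses the signs. For \<open>n \<le> m choose 2\<close>,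
  take the sign of \<open>x + u\<close> as a permutation, where \<open>x + u = id\<close> at some vertex; on a shift clique
  the terms cancel in pairs by a sign-reversing involution.
\<close>

definition adjacency_matrix :: "'v list \<Rightarrow> ('v \<Rightarrow> 'v \<Rightarrow> bool) \<Rightarrow> real mat" where
  "adjacency_matrix vs adj = mat (length vs) (length vs) (\<lambda>(i, j). if adj (vs ! i) (vs ! j) then 1 else 0)"

lemma dim_adjacency_matrix [simp]:
  "dim_row (adjacency_matrix vs adj) = length vs" "dim_col (adjacency_matrix vs adj) = length vs"
  by (simp_all add: adjacency_matrix_def)

locale edge_clique_partition =
  fixes vs :: "'v list" and adj :: "'v \<Rightarrow> 'v \<Rightarrow> bool"
    and cliques :: "'c set" and member :: "'c \<Rightarrow> 'v \<Rightarrow> bool" and c :: nat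
  assumes distinct_vs: "distinct vs"
    and finite_cliques: "finite cliques"
    and adj_irrefl: "\<not> adj x x"
    and card_common_cliques: "x \<in> set vs \<Longrightarrow> y \<in> set vs \<Longrightarrow>
      card {C \<in> cliques. member C x \<and> member C y} = (if x = y then c else if adj x y then 1 else 0)"
begin

definition incidence :: "'c \<Rightarrow> nat \<Rightarrow> real" where
  "incidence C i = of_bool (member C (vs ! i))"

definition clique_sum :: "'c \<Rightarrow> real vec \<Rightarrow> real" where
  "clique_sum C v = (\<Sum>j<length vs. incidence C j * v $ j)"

lemma sum_incidence_mult:
  assumes "i < length vs" "j < length vs"
  shows "(\<Sum>C\<in>cliques. incidence C i * incidence C j)
       = adjacency_matrix vs adj $$ (i, j) + of_bool (i = j) * real c"
proof -
  have "(\<Sum>C\<in>cliques. incidence C i * incidence C j)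
      = real (card {C \<in> cliques. member C (vs ! i) \<and> member C (vs ! j)})"
    unfolding incidence_def of_bool_conj[symmetric]
    using finite_cliques by (simp add: sum_of_bool_eq Collect_conj_eq)
  also have "\<dots> = adjacency_matrix vs adj $$ (i, j) + of_bool (i = j) * real c"
    using assms card_common_cliques[of "vs ! i" "vs ! j"] nth_eq_iff_index_eq[OF distinct_vs assms]
    by (cases "i = j") (simp_all add: adjacency_matrix_def adj_irrefl)
  finally show ?thesis .
qed

lemma adjacency_matrix_mult_vec_plus:
  assumes v: "v \<in> carrier_vec (length vs)" and i: "i < length vs"
  shows "(adjacency_matrix vs adj *\<^sub>v v) $ i + c * v $ i
       = (\<Sum>C\<in>cliques. incidence C i * clique_sum C v)"
proof -
  have "(\<Sum>C\<in>cliques. incidence C i * clique_sum C v)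
      = (\<Sum>C\<in>cliques. \<Sum>j<length vs. incidence C i * incidence C j * v $ j)"
    by (simp add: clique_sum_def sum_distrib_left mult.assoc)
  also have "\<dots> = (\<Sum>j<length vs. (\<Sum>C\<in>cliques. incidence C i * incidence C j) * v $ j)"
    by (subst sum.swap) (simp add: sum_distrib_right)
  also have "\<dots> = (\<Sum>j<length vs. adjacency_matrix vs adj $$ (i, j) * v $ j
                     + of_bool (i = j) * real c * v $ j)"
    using i by (intro sum.cong refl) (simp add: sum_incidence_mult distrib_right)
  also have "\<dots> = (adjacency_matrix vs adj *\<^sub>v v) $ i + c * v $ i"
    using v i by (simp add: sum.distrib adjacency_matrix_def scalar_prod_def lessThan_atLeast0 of_bool_def
        if_distrib[of "\<lambda>x. x * _"] cong: if_cong)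
  finally show ?thesis ..
qed

lemma eigenvalue_ge_neg_c:
  assumes "eigenvalue (adjacency_matrix vs adj) k"
  shows "- real c \<le> k"
proof -
  obtain v where v: "v \<in> carrier_vec (length vs)" "v \<noteq> 0\<^sub>v (length vs)"
      "adjacency_matrix vs adj *\<^sub>v v = k \<cdot>\<^sub>v v"
    using assms by (auto simp: eigenvalue_def eigenvector_def carrier_mat_def)
  have "(c + k) * (\<Sum>i<length vs. (v $ i)\<^sup>2)
      = (\<Sum>i<length vs. v $ i * ((adjacency_matrix vs adj *\<^sub>v v) $ i + c * v $ i))"
    using v by (subst sum_distrib_left, intro sum.cong refl) (simp add: power2_eq_square algebra_simps)
  also have "\<dots> = (\<Sum>i<length vs. \<Sum>C\<in>cliques. incidence C i * v $ i * clique_sum C v)"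
    using adjacency_matrix_mult_vec_plus[OF v(1)]
    by (intro sum.cong refl) (simp add: sum_distrib_left mult_ac)
  also have "\<dots> = (\<Sum>C\<in>cliques. (clique_sum C v)\<^sup>2)"
    by (subst sum.swap) (simp add: clique_sum_def power2_eq_square sum_distrib_right)
  finally have "0 \<le> (c + k) * (\<Sum>i<length vs. (v $ i)\<^sup>2)"
    by (simp add: sum_nonneg)
  moreover obtain i where "i < length vs" "v $ i \<noteq> 0"
    using v(1,2) by (metis carrier_vecD eq_vecI index_zero_vec)
  then have "0 < (\<Sum>i<length vs. (v $ i)\<^sup>2)"
    by (intro sum_pos2[of _ i]) auto
  ultimately show ?thesis
    by (simp add: zero_le_mult_iff)
qed

lemma eigenvalue_neg_c_if_clique_sums_zero:
  fixes g :: "'v \<Rightarrow> real"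
  assumes zero: "\<And>C. C \<in> cliques \<Longrightarrow> (\<Sum>x | x \<in> set vs \<and> member C x. g x) = 0"
    and x0: "x0 \<in> set vs" "g x0 \<noteq> 0"
  shows "eigenvalue (adjacency_matrix vs adj) (- real c)"
proof -
  define v where "v = vec (length vs) (\<lambda>i. g (vs ! i))"
  have v: "v \<in> carrier_vec (length vs)"
    by (simp add: v_def)
  have "clique_sum C v = 0" if "C \<in> cliques" for C
  proof -
    have "clique_sum C v = (\<Sum>x\<in>set vs. of_bool (member C x) * g x)"
      unfolding clique_sum_def incidence_def v_def
      by (subst sum.reindex_bij_betw[OF bij_betw_nth[OF distinct_vs], symmetric]) auto
    also have "\<dots> = (\<Sum>x | x \<in> set vs \<and> member C x. g x)"
      by (simp add: sum.inter_filter of_bool_def if_distrib[of "\<lambda>x. x * _"] cong: if_cong)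
    finally show ?thesis
      using zero[OF that] by simp
  qed
  then have "(adjacency_matrix vs adj *\<^sub>v v) $ i = - real c * v $ i" if "i < length vs" for i
    using adjacency_matrix_mult_vec_plus[OF v that] by simp
  then have "adjacency_matrix vs adj *\<^sub>v v = (- real c) \<cdot>\<^sub>v v"
    using v by (intro eq_vecI) auto
  moreover have "v \<noteq> 0\<^sub>v (length vs)"
  proof
    assume "v = 0\<^sub>v (length vs)"
    moreover obtain i where "i < length vs" "vs ! i = x0"
      using x0(1) by (auto simp: in_set_conv_nth)
    ultimately show False
      using x0(2) by (metis index_vec index_zero_vec(1) v_def)
  qed
  ultimately show ?thesis
    using v by (auto simp: eigenvalue_def eigenvector_def carrier_mat_def)
qed

end

lemma SR_vertices_finite: "finite (SR_vertices m n)"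
proof (rule finite_subset)
  show "SR_vertices m n \<subseteq> {xs. set xs \<subseteq> {..n} \<and> length xs = m}"
    by (auto simp: SR_vertices_def member_le_sum_list)
qed (rule finite_lists_length_eq, simp)

lemma SR_enum: "distinct (SR_enum m n) \<and> set (SR_enum m n) = SR_vertices m n"
  unfolding SR_enum_def by (rule someI_ex) (use finite_distinct_list[OF SR_vertices_finite] in blast)

lemma SR_adj_matrix_eq_adjacency_matrix:
  "SR_adj_matrix m n = adjacency_matrix (SR_enum m n) (SR_adj m)"
  unfolding adjacency_matrix_def SR_adj_matrix_def Let_def ..

definition diff_positions :: "nat \<Rightarrow> nat list \<Rightarrow> nat list \<Rightarrow> nat set" where
  "diff_positions m x y = {i. i < m \<and> x ! i \<noteq> y ! i}"

lemma diff_positions_commute: "diff_positions m x y = diff_positions m y x"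
  by (auto simp: diff_positions_def)

lemma SR_adj_iff_card_diff_positions: "SR_adj m x y \<longleftrightarrow> card (diff_positions m x y) = 2"
  by (simp add: SR_adj_def diff_positions_def)

lemma SR_vertices_eq_iff_diff_positions_empty:
  assumes "x \<in> SR_vertices m n" "y \<in> SR_vertices m n"
  shows "x = y \<longleftrightarrow> diff_positions m x y = {}"
  using assms by (auto simp: SR_vertices_def diff_positions_def intro: nth_equalityI)

lemma SR_sum_eq_on_diff_superset:
  assumes x: "x \<in> SR_vertices m n" and y: "y \<in> SR_vertices m n"
    and S: "diff_positions m x y \<subseteq> S" "S \<subseteq> {..<m}"
  shows "(\<Sum>k\<in>S. x ! k) = (\<Sum>k\<in>S. y ! k)"
proof -
  have sum_list_split: "sum_list z = (\<Sum>k\<in>{..<m} - S. z ! k) + (\<Sum>k\<in>S. z ! k)"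
    if "length z = m" for z :: "nat list"
    using that S(2) finite_subset[OF S(2)]
    by (simp add: sum_list_sum_nth atLeast0LessThan sum.subset_diff[of S "{..<m}"])
  have "(\<Sum>k\<in>{..<m} - S. x ! k) = (\<Sum>k\<in>{..<m} - S. y ! k)"
    using S(1) by (intro sum.cong) (auto simp: diff_positions_def)
  then show ?thesis
    using sum_list_split[of x] sum_list_split[of y] x y by (simp add: SR_vertices_def)
qed

lemma SR_diff_positions_not_singleton:
  assumes "x \<in> SR_vertices m n" "y \<in> SR_vertices m n"
  shows "diff_positions m x y \<noteq> {a}"
proof
  assume D: "diff_positions m x y = {a}"
  then have "a < m" "x ! a \<noteq> y ! a"
    by (auto simp: diff_positions_def)
  moreover have "(\<Sum>k\<in>{a}. x ! k) = (\<Sum>k\<in>{a}. y ! k)"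
    using assms D \<open>a < m\<close> by (intro SR_sum_eq_on_diff_superset) auto
  ultimately show False
    by simp
qed

lemma card_ordered_pairs: "card {(i, j). i < j \<and> j < (m::nat)} = m choose 2"
proof (induction m)
  case (Suc m)
  have "{(i, j). i < j \<and> j < Suc m} = {(i, j). i < j \<and> j < m} \<union> (\<lambda>i. (i, m)) ` {..<m}"
    by auto
  moreover have "finite {(i, j). i < j \<and> j < m}"
    by (rule finite_subset[of _ "{..<m} \<times> {..<m}"]) auto
  moreover have "card ((\<lambda>i. (i, m)) ` {..<m}) = m"
    by (simp add: card_image inj_on_def)
  ultimately have "card {(i, j). i < j \<and> j < Suc m} = (m choose 2) + m"
    using Suc.IH by (simp only:) (subst card_Un_disjoint, auto)
  then show ?case
    by (simp add: numeral_2_eq_2)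
qed simp

lemma card_ordered_pairs_covering:
  assumes D: "D \<subseteq> {..<m}" "card D \<noteq> 1"
  shows "card {(i, j). i < j \<and> j < m \<and> D \<subseteq> {i, j}}
       = (if D = {} then m choose 2 else if card D = 2 then 1 else 0)"
proof -
  have "finite D"
    using D(1) by (rule finite_subset) simp
  then consider "D = {}" | "card D = 2" | "2 < card D"
    using D(2) card_0_eq[of D] by fastforce
  then show ?thesis
  proof cases
    case 1
    then show ?thesis
      using card_ordered_pairs[of m] by simp
  next
    case 2
    then obtain a b where ab: "D = {a, b}" "a < b"
      by (auto simp: card_2_iff) (metis insert_commute linorder_neqE_nat)
    then have "{(i, j). i < j \<and> j < m \<and> D \<subseteq> {i, j}} = {(a, b)}"
      using D(1) by auto
    then show ?thesis
      using ab by simp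
  next
    case 3
    have "\<not> D \<subseteq> {i, j}" for i j :: nat
      using 3 card_mono[of "{i, j}" D] card_insert_le_m1[of 2 "{j}" i] by force
    then show ?thesis
      using 3 by auto
  qed
qed

text \<open>The clique \<open>(i, j, w)\<close> consists of the vertices agreeing with \<open>w\<close> outside \<open>{i, j}\<close>;
  requiring \<open>w ! j = 0\<close> makes the representative \<open>w\<close> unique.\<close>
definition pair_cliques :: "nat \<Rightarrow> nat \<Rightarrow> (nat \<times> nat \<times> nat list) set" where
  "pair_cliques m n = {(i, j, w). i < j \<and> j < m \<and> w \<in> SR_vertices m n \<and> w ! j = 0}"

definition in_pair_clique :: "nat \<Rightarrow> nat \<times> nat \<times> nat list \<Rightarrow> nat list \<Rightarrow> bool" where
  "in_pair_clique m = (\<lambda>(i, j, w) x. diff_positions m x w \<subseteq> {i, j})"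

definition merge_into :: "nat \<Rightarrow> nat \<Rightarrow> nat list \<Rightarrow> nat list" where
  "merge_into i j x = x[i := x ! i + x ! j, j := 0]"

lemma diff_positions_merge_into:
  assumes "i < m" "j < m" "i \<noteq> j"
  shows "diff_positions m y (merge_into i j x) \<subseteq> {i, j} \<longleftrightarrow> diff_positions m y x \<subseteq> {i, j}"
  using assms by (auto simp: diff_positions_def merge_into_def)

lemma pair_clique_eq_merge_into:
  assumes x: "x \<in> SR_vertices m n" and C: "(i, j, w) \<in> pair_cliques m n" "in_pair_clique m (i, j, w) x"
  shows "w = merge_into i j x"
proof -
  have ij: "i < j" "j < m" and w: "w \<in> SR_vertices m n" "w ! j = 0"
    using C(1) by (auto simp: pair_cliques_def)
  have "(\<Sum>k\<in>{i, j}. w ! k) = (\<Sum>k\<in>{i, j}. x ! k)"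
    using C(2) ij by (intro SR_sum_eq_on_diff_superset[OF w(1) x])
      (auto simp: in_pair_clique_def diff_positions_commute)
  then show ?thesis
    using C(2) ij x w by (intro nth_equalityI)
      (auto simp: SR_vertices_def merge_into_def in_pair_clique_def diff_positions_def nth_list_update)
qed

lemma merge_into_in_pair_cliques:
  assumes "x \<in> SR_vertices m n" "i < j" "j < m"
  shows "(i, j, merge_into i j x) \<in> pair_cliques m n"
  using assms by (simp add: pair_cliques_def SR_vertices_def merge_into_def sum_list_update nth_list_update)

lemma card_common_pair_cliques:
  assumes x: "x \<in> SR_vertices m n" and y: "y \<in> SR_vertices m n"
  shows "card {C \<in> pair_cliques m n. in_pair_clique m C x \<and> in_pair_clique m C y}
       = (if x = y then m choose 2 else if SR_adj m x y then 1 else 0)"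
proof -
  define D where "D = diff_positions m x y"
  define pairs where "pairs = {(i, j). i < j \<and> j < m \<and> D \<subseteq> {i, j}}"
  have "{C \<in> pair_cliques m n. in_pair_clique m C x \<and> in_pair_clique m C y}
      = (\<lambda>(i, j). (i, j, merge_into i j x)) ` pairs"
  proof (intro equalityI subsetI)
    fix C assume C: "C \<in> {C \<in> pair_cliques m n. in_pair_clique m C x \<and> in_pair_clique m C y}"
    then obtain i j w where Cw: "C = (i, j, w)" "i < j" "j < m"
      by (auto simp: pair_cliques_def)
    then have "w = merge_into i j x"
      using C x by (intro pair_clique_eq_merge_into) auto
    then show "C \<in> (\<lambda>(i, j). (i, j, merge_into i j x)) ` pairs"
      using C Cw diff_positions_merge_into[of i m j y x]
      by (auto simp: pairs_def D_def in_pair_clique_def diff_positions_commute)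
  next
    fix C assume "C \<in> (\<lambda>(i, j). (i, j, merge_into i j x)) ` pairs"
    then obtain i j where "C = (i, j, merge_into i j x)" "i < j" "j < m" "D \<subseteq> {i, j}"
      by (auto simp: pairs_def)
    then show "C \<in> {C \<in> pair_cliques m n. in_pair_clique m C x \<and> in_pair_clique m C y}"
      using merge_into_in_pair_cliques[OF x] diff_positions_merge_into[of i m j _ x]
      by (auto simp: in_pair_clique_def D_def diff_positions_def)
  qed
  moreover have "inj_on (\<lambda>(i, j). (i, j, merge_into i j x)) pairs"
    by (auto simp: inj_on_def)
  moreover have "D \<subseteq> {..<m}" "card D \<noteq> 1"
    using SR_diff_positions_not_singleton[OF x y] by (auto simp: D_def diff_positions_def card_1_singleton_iff)
  ultimately show ?thesis
    using card_ordered_pairs_covering[of D m] SR_vertices_eq_iff_diff_positions_empty[OF x y]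
    by (simp add: card_image pairs_def D_def SR_adj_iff_card_diff_positions)
qed

lemma pair_cliques_partition:
  "edge_clique_partition (SR_enum m n) (SR_adj m) (pair_cliques m n) (in_pair_clique m) (m choose 2)"
proof
  show "finite (pair_cliques m n)"
    by (rule finite_subset[of _ "{..<m} \<times> {..<m} \<times> SR_vertices m n"])
      (auto simp: pair_cliques_def SR_vertices_finite)
qed (use SR_enum card_common_pair_cliques in \<open>auto simp: SR_adj_def\<close>)

definition shift_cliques :: "nat \<Rightarrow> nat \<Rightarrow> (nat list \<times> nat) set" where
  "shift_cliques m n = {(w, t). 0 < t \<and> length w = m \<and> sum_list w + t = n}"

definition in_shift_clique :: "nat \<Rightarrow> nat list \<times> nat \<Rightarrow> nat list \<Rightarrow> bool" where
  "in_shift_clique m = (\<lambda>(w, t) x. \<exists>k<m. x = w[k := w ! k + t])"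

lemma card_shift_cliques_containing:
  assumes x: "x \<in> SR_vertices m n"
  shows "card {C \<in> shift_cliques m n. in_shift_clique m C x} = n"
proof -
  have lx: "length x = m" "sum_list x = n"
    using x by (auto simp: SR_vertices_def)
  define T where "T = (SIGMA k:{..<m}. {0<..x ! k})"
  define f where "f = (\<lambda>(k, t). (x[k := x ! k - t], t))"
  have "{C \<in> shift_cliques m n. in_shift_clique m C x} = f ` T"
  proof (intro equalityI subsetI)
    fix C assume "C \<in> {C \<in> shift_cliques m n. in_shift_clique m C x}"
    then obtain w t k where "C = (w, t)" "0 < t" "length w = m" "k < m" "x = w[k := w ! k + t]"
      by (auto simp: shift_cliques_def in_shift_clique_def)
    then show "C \<in> f ` T"
      by (auto simp: f_def T_def intro!: image_eqI[of _ _ "(k, t)"])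
  next
    fix C assume "C \<in> f ` T"
    then obtain k t where kt: "C = (x[k := x ! k - t], t)" "k < m" "0 < t" "t \<le> x ! k"
      by (auto simp: f_def T_def)
    moreover have "sum_list (x[k := x ! k - t]) + t = n"
      using kt lx elem_le_sum_list[of k x] by (simp add: sum_list_update)
    ultimately show "C \<in> {C \<in> shift_cliques m n. in_shift_clique m C x}"
      using lx by (auto simp: shift_cliques_def in_shift_clique_def)
  qed
  moreover have "inj_on f T"
  proof (rule inj_onI)
    fix a b assume "a \<in> T" "b \<in> T" "f a = f b"
    moreover obtain k t k' t' where "a = (k, t)" "b = (k', t')"
      by fastforce
    moreover have "k = k'" if "x[k := x ! k - t] = x[k' := x ! k' - t]" "k < m" "0 < t" "t \<le> x ! k" for t
      using arg_cong[where f = "\<lambda>z. z ! k", OF that(1)] that(2-4) lx(1)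
      by (cases "k = k'") auto
    ultimately show "a = b"
      by (auto simp: f_def T_def)
  qed
  moreover have "card T = n"
    using lx by (simp add: T_def sum_list_sum_nth atLeast0LessThan)
  ultimately show ?thesis
    by (simp add: card_image)
qed

lemma common_shift_clique_eq:
  assumes C: "(w, t) \<in> shift_cliques m n" "in_shift_clique m (w, t) x" "in_shift_clique m (w, t) y"
    and "x \<noteq> y"
  shows "SR_adj m x y \<and> (w, t) = (map2 min x y, n - sum_list (map2 min x y))"
proof -
  obtain k l where kl: "k < m" "l < m" "x = w[k := w ! k + t]" "y = w[l := w ! l + t]"
    using C by (auto simp: in_shift_clique_def)
  have t: "0 < t" "length w = m" "sum_list w + t = n"
    using C(1) by (auto simp: shift_cliques_def)
  have "k \<noteq> l"
  proof
    assume "k = l"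
    then have "x = y"
      using kl by simp
    with \<open>x \<noteq> y\<close> show False ..
  qed
  then have "diff_positions m x y = {k, l}"
    using kl t by (auto simp: diff_positions_def nth_list_update)
  then have "SR_adj m x y"
    using \<open>k \<noteq> l\<close> by (simp add: SR_adj_iff_card_diff_positions)
  moreover have "w = map2 min x y"
  proof (rule nth_equalityI)
    fix i assume "i < length w"
    then show "w ! i = map2 min x y ! i"
      using kl t \<open>k \<noteq> l\<close> by (cases "i = k"; cases "i = l") simp_all
  qed (use kl in simp)
  moreover have "t = n - sum_list w"
    using t(3) by simp
  ultimately show ?thesis
    by simp
qed

lemma SR_adj_transfer_positions:
  assumes x: "x \<in> SR_vertices m n" and y: "y \<in> SR_vertices m n" and "SR_adj m x y"
  obtains p q where "diff_positions m x y = {p, q}" "y ! p < x ! p" "x ! q < y ! q"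
    "x ! p + x ! q = y ! p + y ! q"
proof -
  obtain a b where ab: "diff_positions m x y = {a, b}" "a \<noteq> b"
    using \<open>SR_adj m x y\<close> by (auto simp: SR_adj_iff_card_diff_positions card_2_iff)
  then have abm: "a < m" "b < m" "x ! a \<noteq> y ! a" "x ! b \<noteq> y ! b"
    by (auto simp: diff_positions_def)
  have sum_ab: "x ! a + x ! b = y ! a + y ! b"
    using SR_sum_eq_on_diff_superset[OF x y, of "{a, b}"] ab abm by simp
  show ?thesis
  proof (cases "y ! a < x ! a")
    case True
    then show ?thesis
      using that[of a b] ab sum_ab by simp
  next
    case False
    then have "y ! b < x ! b" "x ! a < y ! a"
      using abm(3) sum_ab by linarith+
    then show ?thesis
      using that[of b a] ab(1) sum_ab by (metis insert_commute add.commute)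
  qed
qed

lemma SR_adj_common_shift_clique:
  assumes x: "x \<in> SR_vertices m n" and y: "y \<in> SR_vertices m n" and "SR_adj m x y"
  defines "C \<equiv> (map2 min x y, n - sum_list (map2 min x y))"
  shows "C \<in> shift_cliques m n \<and> in_shift_clique m C x \<and> in_shift_clique m C y"
proof -
  have lx: "length x = m" "sum_list x = n" and ly: "length y = m"
    using x y by (auto simp: SR_vertices_def)
  obtain p q where pq: "diff_positions m x y = {p, q}" "y ! p < x ! p" "x ! q < y ! q"
    and sum_pq: "x ! p + x ! q = y ! p + y ! q"
    using SR_adj_transfer_positions[OF assms(1-3)] .
  have "p \<in> diff_positions m x y" "q \<in> diff_positions m x y"
    using pq(1) by simp_all
  then have pqm: "p < m" "q < m" "p \<noteq> q"
    using pq(2,3) by (auto simp: diff_positions_def)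
  have agree: "x ! k = y ! k" if "k < m" "k \<noteq> p" "k \<noteq> q" for k
    using that pq(1) by (auto simp: diff_positions_def)
  define w where "w = map2 min x y"
  define t where "t = x ! p - y ! p"
  have yq: "y ! q = x ! q + t"
    using sum_pq pq(2) by (simp add: t_def)
  have lw: "length w = m"
    using lx ly by (simp add: w_def)
  have xw: "x = w[p := w ! p + t]"
  proof (rule nth_equalityI)
    fix k assume "k < length x"
    then show "x ! k = w[p := w ! p + t] ! k"
      using lx ly pq(2,3) agree[of k] by (cases "k = p"; cases "k = q") (simp_all add: w_def t_def)
  qed (simp add: lw lx)
  have yw: "y = w[q := w ! q + t]"
  proof (rule nth_equalityI)
    fix k assume "k < length y"
    then show "y ! k = w[q := w ! q + t] ! k"
      using lx ly pq(2,3) pqm(3) yq agree[of k] by (cases "k = p"; cases "k = q") (simp_all add: w_def)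
  qed (simp add: lw ly)
  have "sum_list w + t = n"
    using lx(2) elem_le_sum_list[of p w] pqm(1) lw by (simp add: xw sum_list_update)
  moreover have "0 < t"
    using pq(2) by (simp add: t_def)
  ultimately have "(w, t) \<in> shift_cliques m n \<and> in_shift_clique m (w, t) x \<and> in_shift_clique m (w, t) y"
    using lw xw yw pqm by (auto simp: shift_cliques_def in_shift_clique_def)
  moreover have "C = (w, t)"
    using \<open>sum_list w + t = n\<close> by (simp add: C_def w_def[symmetric])
  ultimately show ?thesis
    by simp
qed

lemma card_common_shift_cliques:
  assumes x: "x \<in> SR_vertices m n" and y: "y \<in> SR_vertices m n"
  shows "card {C \<in> shift_cliques m n. in_shift_clique m C x \<and> in_shift_clique m C y}
       = (if x = y then n else if SR_adj m x y then 1 else 0)"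
proof (cases "x = y")
  case True
  then show ?thesis
    using card_shift_cliques_containing[OF x] by simp
next
  case False
  define C0 where "C0 = (map2 min x y, n - sum_list (map2 min x y))"
  have "{C \<in> shift_cliques m n. in_shift_clique m C x \<and> in_shift_clique m C y}
      = (if SR_adj m x y then {C0} else {})"
    using common_shift_clique_eq[OF _ _ _ False] SR_adj_common_shift_clique[OF x y]
    by (auto simp: C0_def)
  then show ?thesis
    using False by simp
qed

lemma shift_cliques_partition:
  "edge_clique_partition (SR_enum m n) (SR_adj m) (shift_cliques m n) (in_shift_clique m) n"
proof
  have "shift_cliques m n \<subseteq> {w. set w \<subseteq> {..n} \<and> length w = m} \<times> {..n}"
    by (auto simp: shift_cliques_def dest!: member_le_sum_list)
  then show "finite (shift_cliques m n)"
    by (rule finite_subset) (simp add: finite_lists_length_eq)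
qed (use SR_enum card_common_shift_cliques in \<open>auto simp: SR_adj_def\<close>)

lemma sum_eq_zero_if_sign_reversing_involution:
  fixes g :: "'a \<Rightarrow> 'b :: linordered_ab_group_add"
  assumes "\<And>x. x \<in> A \<Longrightarrow> \<sigma> x \<in> A" "\<And>x. x \<in> A \<Longrightarrow> \<sigma> (\<sigma> x) = x"
    and "\<And>x. x \<in> A \<Longrightarrow> g (\<sigma> x) = - g x"
  shows "sum g A = 0"
proof -
  have "sum g A = (\<Sum>x\<in>A. - g x)"
    by (rule sum.reindex_bij_witness[of _ \<sigma> \<sigma>]) (use assms in auto)
  then show ?thesis
    by (simp add: sum_negf)
qed

lemma sign_compose_transpose:
  assumes "p permutes {..<(m::nat)}" "i \<noteq> j"
  shows "sign (p \<circ> Transposition.transpose i j) = - sign p"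
  using assms permutation_swap_id[of i j]
  by (simp add: sign_compose sign_swap_id permutes_imp_permutation[OF finite_lessThan])

lemma permutes_lessThan_eq_id:
  assumes "p permutes {..<(m::nat)}" "\<And>k. k < m \<Longrightarrow> p k = k"
  shows "p = id"
  using assms permutes_not_in[OF assms(1)] by (metis eq_id_iff lessThan_iff)

definition signed_rearrangements :: "nat list \<Rightarrow> nat list \<Rightarrow> real" where
  "signed_rearrangements d x =
     (\<Sum>p | p permutes {..<length d} \<and> permute_list p d = x. real_of_int (sign p))"

lemma signed_rearrangements_transpose:
  assumes ij: "i < length d" "j < length d" "i \<noteq> j" and x: "length x = length d"
  shows "signed_rearrangements d (permute_list (Transposition.transpose i j) x)
       = - signed_rearrangements d x"
proof -
  define \<tau> where "\<tau> = Transposition.transpose i j"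
  define P where "P y = {p. p permutes {..<length d} \<and> permute_list p d = y}" for y
  have \<tau>: "\<tau> permutes {..<length d}"
    using ij by (simp add: \<tau>_def permutes_swap_id)
  have \<tau>\<tau>: "p \<circ> \<tau> \<circ> \<tau> = p" for p :: "nat \<Rightarrow> nat"
    by (simp add: \<tau>_def comp_assoc)
  have permute_\<tau>: "permute_list (p \<circ> \<tau>) d = permute_list \<tau> (permute_list p d)" for p
    using \<tau> by (rule permute_list_compose)
  have "permute_list \<tau> (permute_list \<tau> x) = x"
    using permute_list_compose[of \<tau> x \<tau>] \<tau> x \<tau>\<tau>[of id] by simp
  then have P_\<tau>: "p \<circ> \<tau> \<in> P x" if "p \<in> P (permute_list \<tau> x)" for p
    using that permutes_compose[OF \<tau>] permute_\<tau>[of p] by (simp add: P_def)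
  have \<tau>_P: "p \<circ> \<tau> \<in> P (permute_list \<tau> x)" if "p \<in> P x" for p
    using that permutes_compose[OF \<tau>] permute_\<tau>[of p] by (simp add: P_def)
  have "signed_rearrangements d (permute_list \<tau> x) = (\<Sum>p\<in>P x. real_of_int (sign (p \<circ> \<tau>)))"
    unfolding signed_rearrangements_def P_def[symmetric]
    by (rule sum.reindex_bij_witness[of _ "\<lambda>p. p \<circ> \<tau>" "\<lambda>p. p \<circ> \<tau>"]) (use P_\<tau> \<tau>_P \<tau>\<tau> in auto)
  also have "\<dots> = (\<Sum>p\<in>P x. - real_of_int (sign p))"
    using ij(3) by (intro sum.cong refl) (simp add: P_def \<tau>_def sign_compose_transpose[of _ "length d"])
  also have "\<dots> = - signed_rearrangements d x"
    by (simp add: signed_rearrangements_def P_def sum_negf)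
  finally show ?thesis
    by (simp add: \<tau>_def)
qed

lemma signed_rearrangements_self:
  assumes "distinct d"
  shows "signed_rearrangements d d = 1"
proof -
  have "p = id" if "p permutes {..<length d}" "permute_list p d = d" for p
  proof (rule permutes_lessThan_eq_id[OF that(1)])
    fix k assume "k < length d"
    then have "d ! p k = d ! k" "p k < length d"
      using that permute_list_nth[OF that(1), of k] permutes_in_image[OF that(1), of k] by simp_all
    then show "p k = k"
      using assms \<open>k < length d\<close> by (simp add: nth_eq_iff_index_eq)
  qed
  then have "{p. p permutes {..<length d} \<and> permute_list p d = d} = {id}"
    by (auto simp: permutes_id)
  then show ?thesis
    by (simp add: signed_rearrangements_def)
qed

lemma signed_rearrangements_pair_clique_sum:
  assumes C: "C \<in> pair_cliques m n" and d: "length d = m"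
  shows "(\<Sum>x | x \<in> SR_vertices m n \<and> in_pair_clique m C x. signed_rearrangements d x) = 0"
proof -
  obtain i j w where Cw: "C = (i, j, w)" "i < j" "j < m"
    using C by (auto simp: pair_cliques_def)
  define \<tau> where "\<tau> = Transposition.transpose i j"
  have \<tau>: "\<tau> permutes {..<m}"
    using Cw by (simp add: \<tau>_def permutes_swap_id)
  define K where "K = {x. x \<in> SR_vertices m n \<and> in_pair_clique m C x}"
  have "permute_list \<tau> x \<in> K" if "x \<in> K" for x
  proof -
    have "length x = m"
      using that by (simp add: K_def SR_vertices_def)
    then have "sum_list (permute_list \<tau> x) = sum_list x" "length (permute_list \<tau> x) = m"
      using \<tau> by (simp_all add: sum_mset_sum_list[symmetric])
    moreover have "permute_list \<tau> x ! k = x ! k" if "k < m" "k \<noteq> i" "k \<noteq> j" for k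
      using \<tau> that \<open>length x = m\<close> by (simp add: permute_list_nth \<tau>_def)
    ultimately show ?thesis
      using that Cw by (auto simp: K_def SR_vertices_def in_pair_clique_def diff_positions_def)
  qed
  moreover have "permute_list \<tau> (permute_list \<tau> x) = x" if "x \<in> K" for x
    using that \<tau> permute_list_compose[of \<tau> x \<tau>]
    by (simp add: K_def SR_vertices_def \<tau>_def)
  moreover have "signed_rearrangements d (permute_list \<tau> x) = - signed_rearrangements d x" if "x \<in> K" for x
    using that Cw d by (simp add: signed_rearrangements_transpose K_def SR_vertices_def \<tau>_def)
  ultimately show ?thesis
    unfolding K_def[symmetric] by (rule sum_eq_zero_if_sign_reversing_involution)
qed

lemma sum_lessThan_eq_choose_two: "(\<Sum>k<m. k) = m choose 2"
  by (induction m) (simp_all add: numeral_2_eq_2)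

definition staircase :: "nat \<Rightarrow> nat \<Rightarrow> nat list" where
  "staircase m n = [0..<m][m - 1 := m - 1 + (n - (m choose 2))]"

lemma distinct_staircase: "distinct (staircase m n)"
  by (auto simp: staircase_def distinct_conv_nth nth_list_update)

lemma staircase_in_SR_vertices:
  assumes "m choose 2 \<le> n" "0 < m \<or> n = 0"
  shows "staircase m n \<in> SR_vertices m n"
proof (cases "m = 0")
  case False
  have "sum_list [0..<m] = m choose 2"
    by (simp add: sum_list_upt atLeast0LessThan sum_lessThan_eq_choose_two)
  moreover have "m - 1 \<le> sum_list [0..<m]"
    using False elem_le_sum_list[of "m - 1" "[0..<m]"] by simp
  ultimately show ?thesis
    using False assms(1) by (simp add: staircase_def SR_vertices_def sum_list_update)
qed (use assms in \<open>simp add: staircase_def SR_vertices_def\<close>)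

lemma SR_eigenvalue_neg_choose_two:
  assumes "m choose 2 \<le> n" "0 < m \<or> n = 0"
  shows "eigenvalue (SR_adj_matrix m n) (- real (m choose 2))"
proof -
  interpret edge_clique_partition
    "SR_enum m n" "SR_adj m" "pair_cliques m n" "in_pair_clique m" "m choose 2"
    by (rule pair_cliques_partition)
  show ?thesis
    unfolding SR_adj_matrix_eq_adjacency_matrix
  proof (rule eigenvalue_neg_c_if_clique_sums_zero[where g = "signed_rearrangements (staircase m n)"])
    show "staircase m n \<in> set (SR_enum m n)"
      using SR_enum staircase_in_SR_vertices[OF assms] by simp
    show "signed_rearrangements (staircase m n) (staircase m n) \<noteq> 0"
      by (simp add: signed_rearrangements_self distinct_staircase)
  next
    fix C assume "C \<in> pair_cliques m n"
    then show "(\<Sum>x | x \<in> set (SR_enum m n) \<and> in_pair_clique m C x.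
        signed_rearrangements (staircase m n) x) = 0"
      using signed_rearrangements_pair_clique_sum[of C m n "staircase m n"] SR_enum
      by (simp add: staircase_def)
  qed
qed

lemma exists_bounded_summands:
  assumes "N \<le> m choose 2"
  shows "\<exists>u::nat \<Rightarrow> nat. (\<forall>k. u k \<le> k) \<and> (\<Sum>k<m. u k) = N"
  using assms
proof (induction m arbitrary: N)
  case 0
  then show ?case
    by (intro exI[of _ "\<lambda>_. 0"]) (simp add: numeral_2_eq_2)
next
  case (Suc m)
  show ?case
  proof (cases "N \<le> m choose 2")
    case True
    then obtain u where u: "\<forall>k. u k \<le> k" "(\<Sum>k<m. u k) = N"
      using Suc.IH by blast
    moreover have "(\<Sum>k<m. (u(m := 0)) k) = (\<Sum>k<m. u k)"
      by (rule sum.cong) auto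
    ultimately show ?thesis
      by (intro exI[of _ "u(m := 0)"]) simp
  next
    case False
    define u where "u k = (if k < m then k else if k = m then N - (m choose 2) else 0)" for k
    have "(\<Sum>k<m. u k) = (\<Sum>k<m. k)"
      by (rule sum.cong) (auto simp: u_def)
    then have "(\<Sum>k<m. u k) = m choose 2"
      by (simp add: sum_lessThan_eq_choose_two)
    moreover have "N - (m choose 2) \<le> m"
      using Suc.prems by (simp add: numeral_2_eq_2)
    ultimately show ?thesis
      using False by (intro exI[of _ u]) (simp add: u_def)
  qed
qed

text \<open>At most one permutation qualifies, so this is the sign of \<open>x + u\<close> if \<open>x + u\<close> is a permutation
  of \<open>{0..<length x}\<close>, and \<open>0\<close> otherwise.\<close>
definition offset_perm_sign :: "(nat \<Rightarrow> nat) \<Rightarrow> nat list \<Rightarrow> real" where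
  "offset_perm_sign u x =
     (\<Sum>p | p permutes {..<length x} \<and> (\<forall>l<length x. p l = x ! l + u l). real_of_int (sign p))"

lemma offset_perm_sign_diagonal:
  assumes "\<forall>k. u k \<le> k"
  shows "offset_perm_sign u (map (\<lambda>k. k - u k) [0..<m]) = 1"
proof -
  have "{p. p permutes {..<m} \<and> (\<forall>l<m. p l = (l - u l) + u l)} = {id}"
    using assms by (auto simp: permutes_id intro: permutes_lessThan_eq_id)
  then show ?thesis
    by (simp add: offset_perm_sign_def)
qed

lemma SR_vertex_below_diagonal:
  assumes "n \<le> m choose 2"
  obtains u where "\<forall>k. u k \<le> k" "map (\<lambda>k. k - u k) [0..<m] \<in> SR_vertices m n"
proof -
  obtain u where u: "\<forall>k. u k \<le> k" "(\<Sum>k<m. u k) = (m choose 2) - n"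
    using exists_bounded_summands[of "(m choose 2) - n" m] by auto
  have "sum_list (map (\<lambda>k. k - u k) [0..<m]) = (\<Sum>k<m. k) - (\<Sum>k<m. u k)"
    using u(1) by (simp add: sum_list_sum_nth atLeast0LessThan sum_subtractf_nat)
  also have "\<dots> = n"
    using u(2) assms by (simp add: sum_lessThan_eq_choose_two)
  finally show ?thesis
    using u(1) that by (simp add: SR_vertices_def)
qed

text \<open>Moving the extra \<open>t\<close> from position \<open>k\<close> to the position \<open>k'\<close> that \<open>p\<close> maps to \<open>p k - t\<close>
  keeps the constraint pattern and swaps two values of \<open>p\<close>; doing it twice returns to \<open>(k, p)\<close>.\<close>
lemma shift_partner:
  fixes h :: "nat \<Rightarrow> nat"
  assumes p: "p permutes {..<m}" and k: "k < m" and t: "0 < t"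
    and hp: "\<forall>l<m. p l = h l + (if l = k then t else 0)"
  defines "k' \<equiv> inv_into UNIV p (p k - t)"
  shows "k' < m" "k' \<noteq> k"
    and "\<forall>l<m. (p \<circ> Transposition.transpose k k') l = h l + (if l = k' then t else 0)"
    and "inv_into UNIV (p \<circ> Transposition.transpose k k')
           ((p \<circ> Transposition.transpose k k') k' - t) = k"
proof -
  have "p k < m"
    using permutes_in_image[OF p] k by simp
  then show k': "k' < m"
    using permutes_in_image[OF permutes_inv[OF p], of "p k - t"] by (simp add: k'_def)
  have pk': "p k' = p k - t"
    using permutes_inverses(1)[OF p] by (simp add: k'_def)
  have pk: "p k = h k + t"
    using hp k by simp
  then show "k' \<noteq> k"
    using pk' t by auto
  then have "h k' = h k"
    using hp k' pk' pk by (metis add_diff_cancel_right' add_0_right)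
  then show "\<forall>l<m. (p \<circ> Transposition.transpose k k') l = h l + (if l = k' then t else 0)"
    using hp \<open>k' \<noteq> k\<close> pk pk' by (auto simp: Transposition.transpose_def)
  have "(p \<circ> Transposition.transpose k k') k' - t = (p \<circ> Transposition.transpose k k') k"
    using pk' by simp
  moreover have "p \<circ> Transposition.transpose k k' permutes {..<m}"
    using k k' p by (simp add: permutes_compose permutes_swap_id)
  ultimately show "inv_into UNIV (p \<circ> Transposition.transpose k k')
      ((p \<circ> Transposition.transpose k k') k' - t) = k"
    by (simp only: permutes_inverses(2))
qed

lemma sum_sign_shifted_permutations:
  fixes m t :: nat and h :: "nat \<Rightarrow> nat"
  assumes t: "0 < t"
  defines "P k \<equiv> {p. p permutes {..<m} \<and> (\<forall>l<m. p l = h l + (if l = k then t else 0))}"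
  shows "(\<Sum>(k, p)\<in>Sigma {..<m} P. real_of_int (sign p)) = 0"
proof -
  define \<sigma> :: "nat \<times> (nat \<Rightarrow> nat) \<Rightarrow> nat \<times> (nat \<Rightarrow> nat)" where
    "\<sigma> = (\<lambda>(k, p). let k' = inv_into UNIV p (p k - t) in (k', p \<circ> Transposition.transpose k k'))"
  show ?thesis
  proof (rule sum_eq_zero_if_sign_reversing_involution[of _ \<sigma>])
    fix z assume "z \<in> Sigma {..<m} P"
    then obtain k p where z: "z = (k, p)" "k < m" "p permutes {..<m}"
      and hp: "\<forall>l<m. p l = h l + (if l = k then t else 0)"
      by (auto simp: P_def)
    note partner = shift_partner[OF z(3) z(2) t hp]
    define k' where "k' = inv_into UNIV p (p k - t)"
    have \<sigma>z: "\<sigma> (k, p) = (k', p \<circ> Transposition.transpose k k')"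
      by (simp add: \<sigma>_def k'_def Let_def)
    show "\<sigma> z \<in> Sigma {..<m} P"
      using partner z by (simp add: \<sigma>z k'_def[symmetric] P_def permutes_compose permutes_swap_id)
    show "\<sigma> (\<sigma> z) = z"
      using partner
      by (simp add: \<sigma>z z(1) \<sigma>_def k'_def[symmetric] Let_def comp_assoc transpose_commute[of k' k])
    show "(case \<sigma> z of (k, p) \<Rightarrow> real_of_int (sign p)) = - (case z of (k, p) \<Rightarrow> real_of_int (sign p))"
      using partner z by (simp add: \<sigma>z k'_def[symmetric] sign_compose_transpose)
  qed
qed

lemma offset_perm_sign_shift_clique_sum:
  assumes "C \<in> shift_cliques m n"
  shows "(\<Sum>x | x \<in> SR_vertices m n \<and> in_shift_clique m C x. offset_perm_sign u x) = 0"
proof -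
  obtain w t where Cw: "C = (w, t)" and t: "0 < t" and w: "length w = m" "sum_list w + t = n"
    using assms by (auto simp: shift_cliques_def)
  define F where "F k = w[k := w ! k + t]" for k
  define P where
    "P k = {p. p permutes {..<m} \<and> (\<forall>l<m. p l = (w ! l + u l) + (if l = k then t else 0))}" for k
  have "sum_list (F k) = n" if "k < m" for k
    using that w elem_le_sum_list[of k w] by (simp add: F_def sum_list_update)
  then have clique: "{x. x \<in> SR_vertices m n \<and> in_shift_clique m C x} = F ` {..<m}"
    using w by (auto simp: SR_vertices_def in_shift_clique_def F_def Cw)
  have "inj_on F {..<m}"
  proof (rule inj_onI)
    fix k k' assume "k \<in> {..<m}" "k' \<in> {..<m}" "F k = F k'"
    moreover have "F k ! k \<noteq> F k' ! k" if "k \<noteq> k'"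
      using that t w \<open>k \<in> {..<m}\<close> by (simp add: F_def)
    ultimately show "k = k'"
      by metis
  qed
  moreover have "offset_perm_sign u (F k) = (\<Sum>p\<in>P k. real_of_int (sign p))" if "k < m" for k
    unfolding offset_perm_sign_def P_def
    using that w by (intro sum.cong Collect_cong refl) (auto simp: F_def nth_list_update)
  ultimately have "(\<Sum>x | x \<in> SR_vertices m n \<and> in_shift_clique m C x. offset_perm_sign u x)
      = (\<Sum>k<m. \<Sum>p\<in>P k. real_of_int (sign p))"
    by (simp add: clique sum.reindex)
  also have "\<dots> = (\<Sum>(k, p)\<in>Sigma {..<m} P. real_of_int (sign p))"
    by (rule sum.Sigma) (auto simp: P_def intro: finite_subset[OF _ finite_permutations[of "{..<m}"]])
  also have "\<dots> = 0"
    unfolding P_def by (rule sum_sign_shifted_permutations[OF t])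
  finally show ?thesis .
qed

lemma SR_eigenvalue_neg_n:
  assumes "n \<le> m choose 2"
  shows "eigenvalue (SR_adj_matrix m n) (- real n)"
proof -
  interpret edge_clique_partition "SR_enum m n" "SR_adj m" "shift_cliques m n" "in_shift_clique m" n
    by (rule shift_cliques_partition)
  obtain u where u: "\<forall>k. u k \<le> k" "map (\<lambda>k. k - u k) [0..<m] \<in> SR_vertices m n"
    using SR_vertex_below_diagonal[OF assms] .
  show ?thesis
    unfolding SR_adj_matrix_eq_adjacency_matrix
  proof (rule eigenvalue_neg_c_if_clique_sums_zero[where g = "offset_perm_sign u"])
    show "map (\<lambda>k. k - u k) [0..<m] \<in> set (SR_enum m n)"
      using SR_enum u(2) by simp
    show "offset_perm_sign u (map (\<lambda>k. k - u k) [0..<m]) \<noteq> 0"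
      using offset_perm_sign_diagonal[OF u(1)] by simp
  next
    fix C assume "C \<in> shift_cliques m n"
    then show "(\<Sum>x | x \<in> set (SR_enum m n) \<and> in_shift_clique m C x. offset_perm_sign u x) = 0"
      using offset_perm_sign_shift_clique_sum[of C m n u] SR_enum by simp
  qed
qed

lemma SR_eigenvalue_ge:
  assumes "eigenvalue (SR_adj_matrix m n) k"
  shows "- real n \<le> k" "- real (m choose 2) \<le> k"
proof -
  interpret pair: edge_clique_partition
    "SR_enum m n" "SR_adj m" "pair_cliques m n" "in_pair_clique m" "m choose 2"
    by (rule pair_cliques_partition)
  interpret shift: edge_clique_partition "SR_enum m n" "SR_adj m" "shift_cliques m n" "in_shift_clique m" n
    by (rule shift_cliques_partition)
  show "- real n \<le> k" "- real (m choose 2) \<le> k"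
    using assms shift.eigenvalue_ge_neg_c pair.eigenvalue_ge_neg_c
    by (simp_all add: SR_adj_matrix_eq_adjacency_matrix)
qed

theorem proposition2:
  fixes m n :: nat
  assumes "SR_vertices m n \<noteq> {}"
  shows "eigenvalue (SR_adj_matrix m n) (max (- real n) (- real (m choose 2)))
       \<and> (\<forall>k. eigenvalue (SR_adj_matrix m n) k \<longrightarrow> max (- real n) (- real (m choose 2)) \<le> k)"
proof
  have "0 < m \<or> n = 0"
    using assms by (auto simp: SR_vertices_def)
  then show "eigenvalue (SR_adj_matrix m n) (max (- real n) (- real (m choose 2)))"
    using SR_eigenvalue_neg_n SR_eigenvalue_neg_choose_two by (cases "n \<le> m choose 2") (simp_all add: max_def)
qed (simp add: SR_eigenvalue_ge)

end
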